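(* Let $X$ be an extensible marked Dynkin diagram with $d$ nodes and let $\Delta$ be the common difference of $\{\det(X_n)\}_{n\ge d}$. Then there exists a sequence of integers $(a_i)_{i\ge1}$, depending only on $X$ and its node numbering, such that in $P(X_n)$ $$(-\Delta)\,\omega_i^{(n)}\equiv a_i\,\overline{\omega}_1^{(n)}\pmod{Q(X_n)}$$ for all $i=1,\dots,n$ and for all $n\ge d$ such that $\det(X_n)\ne0$. Moreover, the $a_i$ are the unique integers with this property.
   Context: A marked Dynkin diagram $X$ has nodes $1,\dots,d$ with node $d$ distinguished and symmetrizable generalized Cartan matrix $C(X)$. For $n\ge d$, $X_n$ is obtained by attaching a simply-laced chain of new nodes $d+1,\dots,n$ to node $d$ (so $C(X_n)$ has $C(X)$ as upper-left block, $2$ on the remaining diagonal, $-1$ in positions $(i,i+1),(i+1,i)$ for $d\le i<n$, $0$ elsewhere). $\det(Y)$ is the determinant of the generalized Cartan matrix of $Y$. $X$ is extensible if $\Delta\ne0$, $\det(X)\ne0$ and $\gcd(\Delta,\det X)=1$. For $\mathfrak g(X_n)$: simple roots $\alpha_i^{(n)}$, coroots $\check\alpha_i^{(n)}$ with $\alpha_j^{(n)}(\check\alpha_i^{(n)})=C(X_n)_{ij}$, root lattice $Q(X_n)$, weight lattice $P(X_n)$, fundamental weights $\omega_i^{(n)}$ with $\omega_i^{(n)}(\check\alpha_j^{(n)})=\delta_{ij}$, and $\overline{\omega}_i^{(n)}=\omega_{n-i+1}^{(n)}$. *)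

theory Defs
  imports Complex_Main "HOL-Combinatorics.Permutations"
begin

text \<open>Square integer matrices with rows/columns indexed by 1..n are represented
  as functions nat => nat => int (entries outside 1..n are irrelevant).\<close>

definition gdet :: "nat \<Rightarrow> (nat \<Rightarrow> nat \<Rightarrow> int) \<Rightarrow> int" where
  "gdet n A = (\<Sum>p | p permutes {1..n}. sign p * (\<Prod>i\<in>{1..n}. A i (p i)))"

definition is_gcm :: "nat \<Rightarrow> (nat \<Rightarrow> nat \<Rightarrow> int) \<Rightarrow> bool" where
  "is_gcm d C \<longleftrightarrow>
     (\<forall>i\<in>{1..d}. C i i = 2) \<and>
     (\<forall>i\<in>{1..d}. \<forall>j\<in>{1..d}. i \<noteq> j \<longrightarrow> C i j \<le> 0) \<and>
     (\<forall>i\<in>{1..d}. \<forall>j\<in>{1..d}. C i j = 0 \<longleftrightarrow> C j i = 0)"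

text \<open>Symmetrizable: C = D B with D positive diagonal and B symmetric,
  equivalently e_i C_ij = e_j C_ji for positive e_i (e = D^{-1}).\<close>
definition symmetrizable :: "nat \<Rightarrow> (nat \<Rightarrow> nat \<Rightarrow> int) \<Rightarrow> bool" where
  "symmetrizable d C \<longleftrightarrow>
     (\<exists>e :: nat \<Rightarrow> rat. (\<forall>i\<in>{1..d}. e i > 0) \<and>
        (\<forall>i\<in>{1..d}. \<forall>j\<in>{1..d}. e i * of_int (C i j) = e j * of_int (C j i)))"

definition ext_cartan :: "(nat \<Rightarrow> nat \<Rightarrow> int) \<Rightarrow> nat \<Rightarrow> nat \<Rightarrow> nat \<Rightarrow> nat \<Rightarrow> int" where
  "ext_cartan C d n i j =
     (if i \<in> {1..d} \<and> j \<in> {1..d} then C i j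
      else if i \<in> {1..n} \<and> j \<in> {1..n} \<and> i = j then 2
      else if (d \<le> i \<and> i < n \<and> j = i + 1) \<or> (d \<le> j \<and> j < n \<and> i = j + 1) then -1
      else 0)"

definition det_ext :: "(nat \<Rightarrow> nat \<Rightarrow> int) \<Rightarrow> nat \<Rightarrow> nat \<Rightarrow> int" where
  "det_ext C d n = gdet n (ext_cartan C d n)"

text \<open>Common difference Delta of the arithmetic progression det(X_n), n >= d.\<close>
definition Delta :: "(nat \<Rightarrow> nat \<Rightarrow> int) \<Rightarrow> nat \<Rightarrow> int" where
  "Delta C d = det_ext C d (d + 1) - det_ext C d d"

definition extensible :: "(nat \<Rightarrow> nat \<Rightarrow> int) \<Rightarrow> nat \<Rightarrow> bool" where
  "extensible C d \<longleftrightarrow> Delta C d \<noteq> 0 \<and> gdet d C \<noteq> 0 \<and> gcd (Delta C d) (gdet d C) = 1"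

text \<open>When det(X_n) is nonzero, the coroots of g(X_n) form a basis of h, so an
  element lambda of h* is determined by the vector (lambda(coroot_j))_{j=1..n}.
  We represent elements of P(X_n) by this integer coordinate vector
  (a function nat => int vanishing outside 1..n).\<close>

definition fund_weight :: "nat \<Rightarrow> nat \<Rightarrow> (nat \<Rightarrow> int)" where
  "fund_weight n i = (\<lambda>j. if j \<in> {1..n} \<and> j = i then 1 else 0)"

text \<open>alpha_j(coroot_i) = C(X_n)_{ij}.\<close>
definition simple_root :: "(nat \<Rightarrow> nat \<Rightarrow> int) \<Rightarrow> nat \<Rightarrow> nat \<Rightarrow> nat \<Rightarrow> (nat \<Rightarrow> int)" where
  "simple_root C d n j = (\<lambda>i. if i \<in> {1..n} then ext_cartan C d n i j else 0)"

definition root_lattice :: "(nat \<Rightarrow> nat \<Rightarrow> int) \<Rightarrow> nat \<Rightarrow> nat \<Rightarrow> (nat \<Rightarrow> int) set" where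
  "root_lattice C d n =
     {(\<lambda>i. \<Sum>j\<in>{1..n}. c j * simple_root C d n j i) | c :: nat \<Rightarrow> int. True}"

definition smult_w :: "int \<Rightarrow> (nat \<Rightarrow> int) \<Rightarrow> (nat \<Rightarrow> int)" where
  "smult_w k v = (\<lambda>j. k * v j)"

definition congr_Q :: "(nat \<Rightarrow> nat \<Rightarrow> int) \<Rightarrow> nat \<Rightarrow> nat \<Rightarrow> (nat \<Rightarrow> int) \<Rightarrow> (nat \<Rightarrow> int) \<Rightarrow> bool" where
  "congr_Q C d n lam mu \<longleftrightarrow> (\<lambda>j. lam j - mu j) \<in> root_lattice C d n"

definition fund_weight_bar :: "nat \<Rightarrow> nat \<Rightarrow> (nat \<Rightarrow> int)" where
  "fund_weight_bar n i = fund_weight n (n - i + 1)"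

definition weight_seq_prop :: "(nat \<Rightarrow> nat \<Rightarrow> int) \<Rightarrow> nat \<Rightarrow> (nat \<Rightarrow> int) \<Rightarrow> bool" where
  "weight_seq_prop C d a \<longleftrightarrow>
     (\<forall>n\<ge>d. det_ext C d n \<noteq> 0 \<longrightarrow>
        (\<forall>i\<in>{1..n}. congr_Q C d n (smult_w (- Delta C d) (fund_weight n i))
                                    (smult_w (a i) (fund_weight_bar n 1))))"

end

(* A weight lies in the root lattice Q(X_n) iff its coordinate vector is C(X_n) c for an integer
   vector c.  Away from row n, C(X_n) acts like the Cartan matrix of the infinite chain X_oo, so it
   suffices to solve C(X_oo) c = -Delta e_i by an integer c that is constant from max(i, d) on:
   row n then reads -Delta e_i - a_i e_n with a_i = -c(n + 1) independent of n.  For i <= d the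
   columns of the adjugate of C(X_(d+1)) with last diagonal entry 1 (determinant Delta) give c;
   for i > d one adds Delta times a piecewise linear ramp.
   Conversely, two admissible values differ by some kappa with kappa omega_n in Q(X_n).  Cramer's
   rule gives det(X_n) | kappa det(X_(n-1)); as det(X_n) = det X + (n - d) Delta, extensibility
   makes det(X_n) and det(X_(n-1)) coprime, so det(X_n) | kappa for all n > d and kappa = 0. *)

theory Submission
  imports Defs "Jordan_Normal_Form.Determinant"
begin

definition mat_of_fun :: "nat \<Rightarrow> (nat \<Rightarrow> nat \<Rightarrow> 'a) \<Rightarrow> 'a mat" where
  "mat_of_fun n A = mat n n (\<lambda>(i, j). A (Suc i) (Suc j))"

lemma mat_of_fun_carrier [simp]: "mat_of_fun n A \<in> carrier_mat n n"
  by (simp add: mat_of_fun_def)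

lemma dim_mat_of_fun [simp]: "dim_row (mat_of_fun n A) = n" "dim_col (mat_of_fun n A) = n"
  by (simp_all add: mat_of_fun_def)

lemma index_mat_of_fun [simp]: "i < n \<Longrightarrow> j < n \<Longrightarrow> mat_of_fun n A $$ (i, j) = A (Suc i) (Suc j)"
  by (simp add: mat_of_fun_def)

lemma mat_delete_mat_of_fun_last: "mat_delete (mat_of_fun (Suc m) A) m m = mat_of_fun m A"
  by (rule eq_matI) (auto simp: mat_of_fun_def mat_delete_def)

lemma gdet_cong:
  assumes "\<And>i j. i \<in> {1..n} \<Longrightarrow> j \<in> {1..n} \<Longrightarrow> A i j = B i j"
  shows "gdet n A = gdet n B"
proof -
  have "p i \<in> {1..n}" if "p permutes {1..n}" "i \<in> {1..n}" for p i
    using permutes_in_image[OF that(1)] that(2) by blast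
  then show ?thesis
    unfolding gdet_def by (intro sum.cong refl arg_cong2[where f = "(*)"] prod.cong) (auto simp: assms)
qed

lemma gdet_eq_det: "gdet n A = det (mat_of_fun n A)"
proof -
  define shift where "shift = (\<lambda>(p::nat \<Rightarrow> nat) x. if x \<in> {1..n} then Suc (p (x - 1)) else x)"
  have Suc_bij: "bij_betw Suc {0..<n} {1..n}"
    by (simp add: bij_betw_def image_Suc_atLeastLessThan atLeastLessThanSuc_atLeastAtMost)
  have inv_Suc: "inv_into {0..<n} Suc x = x - 1" if "x \<in> {1..n}" for x
    using that by (intro inv_into_f_eq) auto
  have shift_bij: "bij_betw shift {p. p permutes {0..<n}} {p. p permutes {1..n}}"
    using bij_betw_permutations[OF Suc_bij] inv_Suc
    by (simp add: shift_def cong: if_cong)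
  have sign_shift: "sign (shift p) = sign p" if "p permutes {0..<n}" for p
  proof -
    have "permutes_bij_finite p {0..<n} {1..n} Suc (\<lambda>x. x - 1)"
      by unfold_locales (use that Suc_bij in auto)
    from permutes_bij_finite.sign_p'[OF this] show ?thesis by (simp add: shift_def)
  qed
  have prod_shift: "(\<Prod>i\<in>{1..n}. A i (shift p i)) = (\<Prod>i<n. mat_of_fun n A $$ (i, p i))"
    if "p permutes {0..<n}" for p
    using that by (auto simp: prod.atLeast1_atMost_eq shift_def mat_of_fun_def permutes_in_image
        intro!: prod.cong)
  have "gdet n A = (\<Sum>p | p permutes {0..<n}. sign (shift p) * (\<Prod>i\<in>{1..n}. A i (shift p i)))"
    unfolding gdet_def by (subst sum.reindex_bij_betw[OF shift_bij, symmetric]) simp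
  also have "\<dots> = (\<Sum>p | p permutes {0..<n}. sign p * (\<Prod>i<n. mat_of_fun n A $$ (i, p i)))"
    using sign_shift prod_shift by (intro sum.cong) auto
  also have "\<dots> = det (mat_of_fun n A)"
    by (simp add: det_def'[OF mat_of_fun_carrier] lessThan_atLeast0)
  finally show ?thesis .
qed

lemma gdet_tridiagonal_tail:
  assumes zero: "\<And>j. j \<in> {1..m} \<Longrightarrow> A (Suc (Suc m)) j = 0 \<and> A j (Suc (Suc m)) = 0"
    and sub: "A (Suc (Suc m)) (Suc m) = -1" and super: "A (Suc m) (Suc (Suc m)) = -1"
  shows "gdet (Suc (Suc m)) A = A (Suc (Suc m)) (Suc (Suc m)) * gdet (Suc m) A - gdet m A"
proof -
  define M where "M = mat_of_fun (Suc (Suc m)) A"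
  define E where "E = mat_delete M (Suc m) m"
  have E: "E \<in> carrier_mat (Suc m) (Suc m)"
    unfolding E_def M_def using mat_delete_carrier[OF mat_of_fun_carrier, of "Suc (Suc m)" A] by simp
  have E_col: "E $$ (i, m) = A (Suc i) (Suc (Suc m))" if "i < Suc m" for i
    using that by (simp add: E_def M_def mat_delete_def mat_of_fun_def)
  have E_minor: "mat_delete E m m = mat_of_fun m A"
    by (rule eq_matI) (auto simp: E_def M_def mat_delete_def mat_of_fun_def)
  have "det E = (\<Sum>i<Suc m. E $$ (i, m) * cofactor E i m)"
    by (rule laplace_expansion_column[OF E]) simp
  also have "\<dots> = E $$ (m, m) * cofactor E m m"
    using zero E_col by (simp add: lessThan_Suc)
  also have "\<dots> = - gdet m A"
    using E_col super by (simp add: cofactor_def E_minor gdet_eq_det)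
  finally have det_E: "det E = - gdet m A" .
  have M_minor: "mat_delete M (Suc m) (Suc m) = mat_of_fun (Suc m) A"
    by (simp add: M_def mat_delete_mat_of_fun_last)
  have M_last_row: "M $$ (Suc m, m) = -1" "M $$ (Suc m, Suc m) = A (Suc (Suc m)) (Suc (Suc m))"
    using sub by (simp_all add: M_def)
  have "gdet (Suc (Suc m)) A = (\<Sum>j<Suc (Suc m). M $$ (Suc m, j) * cofactor M (Suc m) j)"
    unfolding gdet_eq_det M_def by (rule laplace_expansion_row) simp_all
  also have "\<dots> = M $$ (Suc m, m) * cofactor M (Suc m) m + M $$ (Suc m, Suc m) * cofactor M (Suc m) (Suc m)"
    using zero by (simp add: lessThan_Suc M_def)
  also have "\<dots> = A (Suc (Suc m)) (Suc (Suc m)) * gdet (Suc m) A - gdet m A"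
    using det_E by (simp add: cofactor_def M_last_row M_minor E_def[symmetric] gdet_eq_det)
  finally show ?thesis .
qed

definition gadj :: "nat \<Rightarrow> (nat \<Rightarrow> nat \<Rightarrow> int) \<Rightarrow> nat \<Rightarrow> nat \<Rightarrow> int" where
  "gadj n A i j = adj_mat (mat_of_fun n A) $$ (i - 1, j - 1)"

lemma adj_mat_dims [simp]: "dim_row (adj_mat M) = dim_row M" "dim_col (adj_mat M) = dim_col M"
  by (simp_all add: adj_mat_def)

lemma mult_gadj:
  assumes "k \<in> {1..n}" "m \<in> {1..n}"
  shows "(\<Sum>l\<in>{1..n}. A k l * gadj n A l m) = (if k = m then gdet n A else 0)"
proof -
  define M where "M = mat_of_fun n A"
  have idx: "k - 1 < n" "m - 1 < n" "Suc (k - 1) = k" "Suc (m - 1) = m"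
    using assms by auto
  have "(M * adj_mat M) $$ (k - 1, m - 1) = (if k = m then gdet n A else 0)"
    using assms adj_mat(2)[of M n] by (auto simp: M_def gdet_eq_det)
  moreover have "(M * adj_mat M) $$ (k - 1, m - 1) = (\<Sum>l\<in>{1..n}. A k l * gadj n A l m)"
    using idx by (simp add: M_def gadj_def adj_mat_dims scalar_prod_def sum.atLeast1_atMost_eq lessThan_atLeast0)
  ultimately show ?thesis by simp
qed

lemma gadj_mult:
  assumes "k \<in> {1..n}" "m \<in> {1..n}"
  shows "(\<Sum>l\<in>{1..n}. gadj n A k l * A l m) = (if k = m then gdet n A else 0)"
proof -
  define M where "M = mat_of_fun n A"
  have idx: "k - 1 < n" "m - 1 < n" "Suc (k - 1) = k" "Suc (m - 1) = m"
    using assms by auto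
  have "(adj_mat M * M) $$ (k - 1, m - 1) = (if k = m then gdet n A else 0)"
    using assms adj_mat(3)[of M n] by (auto simp: M_def gdet_eq_det)
  moreover have "(adj_mat M * M) $$ (k - 1, m - 1) = (\<Sum>l\<in>{1..n}. gadj n A k l * A l m)"
    using idx by (simp add: M_def gadj_def adj_mat_dims scalar_prod_def sum.atLeast1_atMost_eq lessThan_atLeast0)
  ultimately show ?thesis by simp
qed

lemma gadj_last: "gadj (Suc m) A (Suc m) (Suc m) = gdet m A"
  by (simp add: gadj_def adj_mat_def cofactor_def mat_delete_mat_of_fun_last gdet_eq_det)

lemma gdet_mult_solution:
  assumes sol: "\<And>k. k \<in> {1..n} \<Longrightarrow> (\<Sum>l\<in>{1..n}. A k l * c l) = v k" and m: "m \<in> {1..n}"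
  shows "gdet n A * c m = (\<Sum>k\<in>{1..n}. gadj n A m k * v k)"
proof -
  have "(\<Sum>k\<in>{1..n}. gadj n A m k * v k) = (\<Sum>k\<in>{1..n}. \<Sum>l\<in>{1..n}. gadj n A m k * A k l * c l)"
    using sol by (intro sum.cong) (auto simp: sol[symmetric] sum_distrib_left mult.assoc)
  also have "\<dots> = (\<Sum>l\<in>{1..n}. (\<Sum>k\<in>{1..n}. gadj n A m k * A k l) * c l)"
    by (subst sum.swap) (simp add: sum_distrib_right)
  also have "\<dots> = (\<Sum>l\<in>{1..n}. if m = l then gdet n A * c l else 0)"
    using gadj_mult[OF m] by (intro sum.cong) simp_all
  also have "\<dots> = gdet n A * c m"
    using m by simp
  finally show ?thesis ..
qed

lemma ext_cartan_restrict:
  assumes "i \<in> {1..m}" "j \<in> {1..m}" "m \<le> m'"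
  shows "ext_cartan C d m' i j = ext_cartan C d m i j"
  using assms by (auto simp: ext_cartan_def)

lemma gdet_ext_cartan_restrict: "m \<le> m' \<Longrightarrow> gdet m (ext_cartan C d m') = det_ext C d m"
  unfolding det_ext_def by (rule gdet_cong) (simp add: ext_cartan_restrict)

lemma det_ext_self: "det_ext C d d = gdet d C"
  unfolding det_ext_def by (rule gdet_cong) (simp add: ext_cartan_def)

lemma det_ext_recurrence:
  assumes "d \<le> Suc m"
  shows "det_ext C d (Suc (Suc m)) = 2 * det_ext C d (Suc m) - det_ext C d m"
proof -
  have "det_ext C d (Suc (Suc m))
      = ext_cartan C d (Suc (Suc m)) (Suc (Suc m)) (Suc (Suc m)) * gdet (Suc m) (ext_cartan C d (Suc (Suc m)))
        - gdet m (ext_cartan C d (Suc (Suc m)))"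
    unfolding det_ext_def by (rule gdet_tridiagonal_tail) (use assms in \<open>auto simp: ext_cartan_def\<close>)
  then show ?thesis
    using assms by (simp add: gdet_ext_cartan_restrict ext_cartan_def)
qed

lemma det_ext_Suc:
  assumes "d \<le> n"
  shows "det_ext C d (Suc n) = det_ext C d n + Delta C d"
  using assms
proof (induction n rule: dec_induct)
  case base
  show ?case by (simp add: Delta_def)
next
  case (step n)
  then show ?case using det_ext_recurrence[of d n C] by simp
qed

lemma det_ext_arith_prog:
  assumes "d \<le> n"
  shows "det_ext C d n = det_ext C d d + int (n - d) * Delta C d"
  using assms
proof (induction n rule: dec_induct)
  case base
  show ?case by simp
next
  case (step n)
  then show ?case by (simp add: det_ext_Suc Suc_diff_le algebra_simps)
qed

lemma Delta_eq_diff: "1 \<le> d \<Longrightarrow> Delta C d = det_ext C d d - det_ext C d (d - 1)"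
  using det_ext_recurrence[of d "d - 1" C] by (simp add: Delta_def)

definition cartan_mult :: "(nat \<Rightarrow> nat \<Rightarrow> int) \<Rightarrow> nat \<Rightarrow> nat \<Rightarrow> (nat \<Rightarrow> int) \<Rightarrow> nat \<Rightarrow> int" where
  "cartan_mult C d n c k = (\<Sum>l\<in>{1..n}. ext_cartan C d n k l * c l)"

(* (C(X_oo) c)_k, where X_oo is X with an infinite chain attached at node d. *)
definition cartan_inf :: "(nat \<Rightarrow> nat \<Rightarrow> int) \<Rightarrow> nat \<Rightarrow> (nat \<Rightarrow> int) \<Rightarrow> nat \<Rightarrow> int" where
  "cartan_inf C d c k =
     (if k < d then (\<Sum>j\<in>{1..d}. C k j * c j)
      else if k = d then (\<Sum>j\<in>{1..d}. C d j * c j) - c (Suc d)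
      else - c (k - 1) + 2 * c k - c (Suc k))"

lemma cartan_mult_chain_row:
  assumes d: "1 \<le> d" and k: "d < k" "k \<le> n"
  shows "cartan_mult C d n c k = - c (k - 1) + 2 * c k + (if k < n then - c (Suc k) else 0)"
proof -
  have entry: "ext_cartan C d n k j * c j = (if j = k - 1 then - c (k - 1) else 0)
      + (if j = k then 2 * c k else 0) + (if j = Suc k then (if k < n then - c (Suc k) else 0) else 0)"
    if "j \<in> {1..n}" for j
    using k that by (auto simp: ext_cartan_def)
  have "k - 1 \<in> {1..n}" "k \<in> {1..n}" "Suc k \<in> {1..n} \<longleftrightarrow> k < n"
    using d k by auto
  then show ?thesis
    unfolding cartan_mult_def by (simp only: entry sum.distrib sum.delta finite_atLeastAtMost cong: sum.cong) simp
qed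

lemma cartan_mult_eq_cartan_inf:
  assumes d: "1 \<le> d" and n: "d \<le> n" and k: "k \<in> {1..n}"
  shows "cartan_mult C d n c k = cartan_inf C d c k + (if k = n then c (Suc n) else 0)"
proof -
  consider "k < d" | "k = d" "d = n" | "k = d" "d < n" | "d < k" using n by linarith
  then show ?thesis
  proof cases
    case 1
    have "cartan_mult C d n c k = (\<Sum>j\<in>{1..d}. ext_cartan C d n k j * c j)"
      unfolding cartan_mult_def using 1 n by (intro sum.mono_neutral_right) (auto simp: ext_cartan_def)
    also have "\<dots> = (\<Sum>j\<in>{1..d}. C k j * c j)"
      using 1 k by (intro sum.cong) (auto simp: ext_cartan_def)
    finally show ?thesis using 1 n by (simp add: cartan_inf_def)
  next
    case 2
    then have "cartan_mult C d n c k = (\<Sum>j\<in>{1..d}. C d j * c j)"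
      unfolding cartan_mult_def using k by (intro sum.cong) (auto simp: ext_cartan_def)
    with 2 show ?thesis by (simp add: cartan_inf_def)
  next
    case 3
    have "cartan_mult C d n c k = (\<Sum>j\<in>{1..Suc d}. ext_cartan C d n k j * c j)"
      unfolding cartan_mult_def using 3 by (intro sum.mono_neutral_right) (auto simp: ext_cartan_def)
    also have "\<dots> = (\<Sum>j\<in>{1..d}. C d j * c j) - c (Suc d)"
      using 3 k by (auto simp: ext_cartan_def intro!: sum.cong)
    finally show ?thesis using 3 by (simp add: cartan_inf_def)
  next
    case 4
    then show ?thesis
      using cartan_mult_chain_row[OF d 4] k by (cases "k = n") (auto simp: cartan_inf_def)
  qed
qed

lemma cartan_inf_linear:
  "cartan_inf C d (\<lambda>j. a * u j + b * v j) k = a * cartan_inf C d u k + b * cartan_inf C d v k"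
proof -
  have "(\<Sum>j\<in>{1..d}. C i j * (a * u j + b * v j))
      = a * (\<Sum>j\<in>{1..d}. C i j * u j) + b * (\<Sum>j\<in>{1..d}. C i j * v j)" for i
    by (simp add: sum.distrib sum_distrib_left algebra_simps)
  then show ?thesis
    unfolding cartan_inf_def by (simp add: algebra_simps)
qed

(* C(X_(d+1)) with last diagonal entry 1: its last row (..., -1, 1) forces every solution to be
   constant from d on, so solutions extend along the infinite chain. *)
definition capped_cartan :: "(nat \<Rightarrow> nat \<Rightarrow> int) \<Rightarrow> nat \<Rightarrow> nat \<Rightarrow> nat \<Rightarrow> int" where
  "capped_cartan C d i j = (if i = Suc d \<and> j = Suc d then 1 else ext_cartan C d (Suc d) i j)"

lemma gdet_capped_cartan_restrict: "m \<le> d \<Longrightarrow> gdet m (capped_cartan C d) = det_ext C d m"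
  unfolding det_ext_def by (rule gdet_cong) (auto simp: capped_cartan_def ext_cartan_restrict)

lemma gdet_capped_cartan:
  assumes "1 \<le> d"
  shows "gdet (Suc d) (capped_cartan C d) = Delta C d"
proof -
  obtain m where m: "d = Suc m" using assms by (cases d) auto
  have "gdet (Suc d) (capped_cartan C d) = gdet d (capped_cartan C d) - gdet m (capped_cartan C d)"
    unfolding m by (subst gdet_tridiagonal_tail) (auto simp: capped_cartan_def ext_cartan_def)
  also have "\<dots> = det_ext C d d - det_ext C d (d - 1)"
    using m by (simp add: gdet_capped_cartan_restrict)
  finally show ?thesis using Delta_eq_diff[OF assms] by simp
qed

definition capped_sol :: "(nat \<Rightarrow> nat \<Rightarrow> int) \<Rightarrow> nat \<Rightarrow> nat \<Rightarrow> nat \<Rightarrow> int" where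
  "capped_sol C d m j = gadj (Suc d) (capped_cartan C d) (min j d) m"

lemma cartan_inf_capped_sol:
  assumes d: "1 \<le> d" and m: "m \<in> {1..d}" and k: "1 \<le> k"
  shows "cartan_inf C d (capped_sol C d m) k = (if k = m then Delta C d else 0)"
proof -
  define g where "g l = gadj (Suc d) (capped_cartan C d) l m" for l
  have g_solves: "(\<Sum>l\<in>{1..Suc d}. capped_cartan C d i l * g l) = (if i = m then Delta C d else 0)"
    if "i \<in> {1..Suc d}" for i
    using mult_gadj[OF that, of m] m gdet_capped_cartan[OF d] by (simp add: g_def)
  have "(\<Sum>l\<in>{1..Suc d}. capped_cartan C d (Suc d) l * g l) = g (Suc d) - g d"
  proof -
    have "(\<Sum>l\<in>{1..Suc d}. capped_cartan C d (Suc d) l * g l)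
        = (\<Sum>l\<in>{1..Suc d}. (if l = Suc d then g l else 0) - (if l = d then g l else 0))"
      by (rule sum.cong) (auto simp: capped_cartan_def ext_cartan_def)
    then show ?thesis using d by (simp add: sum_subtractf)
  qed
  then have g_last: "g (Suc d) = g d"
    using g_solves[of "Suc d"] m by simp
  have sol_eq: "capped_sol C d m l = g l" if "l \<in> {1..Suc d}" for l
    using that g_last by (cases "l = Suc d") (auto simp: capped_sol_def g_def min_def)
  show ?thesis
  proof (cases "k \<le> d")
    case True
    have "cartan_inf C d (capped_sol C d m) k = cartan_mult C d (Suc d) (capped_sol C d m) k"
      using cartan_mult_eq_cartan_inf[OF d, of "Suc d" k] True k by simp
    also have "\<dots> = (\<Sum>l\<in>{1..Suc d}. capped_cartan C d k l * g l)"
      unfolding cartan_mult_def using True by (intro sum.cong) (auto simp: capped_cartan_def sol_eq)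
    also have "\<dots> = (if k = m then Delta C d else 0)"
      using g_solves[of k] True k by simp
    finally show ?thesis .
  next
    case False
    then have "min (k - 1) d = d" "min k d = d" "min (Suc k) d = d" by simp_all
    with False m show ?thesis by (simp add: cartan_inf_def capped_sol_def)
  qed
qed

definition ramp :: "nat \<Rightarrow> nat \<Rightarrow> nat \<Rightarrow> int" where
  "ramp d i j = int (min j i) - int (min j d)"

lemma cartan_inf_ramp:
  assumes "d \<le> i" "1 \<le> k"
  shows "cartan_inf C d (ramp d i) k = (if k = i then 1 else 0) - (if k = d then 1 else 0)"
proof -
  have "ramp d i j = 0" if "j \<le> d" for j
    using that assms by (simp add: ramp_def)
  then have "(\<Sum>j\<in>{1..d}. C k j * ramp d i j) = 0" for k
    by simp
  then show ?thesis
    using assms by (auto simp: cartan_inf_def ramp_def min_def)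
qed

definition weight_sol :: "(nat \<Rightarrow> nat \<Rightarrow> int) \<Rightarrow> nat \<Rightarrow> nat \<Rightarrow> nat \<Rightarrow> int" where
  "weight_sol C d i = (\<lambda>j. - capped_sol C d (min i d) j - Delta C d * ramp d (max i d) j)"

definition weight_coeff :: "(nat \<Rightarrow> nat \<Rightarrow> int) \<Rightarrow> nat \<Rightarrow> nat \<Rightarrow> int" where
  "weight_coeff C d i = capped_sol C d (min i d) d + Delta C d * (int (max i d) - int d)"

lemma cartan_inf_weight_sol:
  assumes "1 \<le> d" "1 \<le> i" "1 \<le> k"
  shows "cartan_inf C d (weight_sol C d i) k = (if k = i then - Delta C d else 0)"
proof -
  have "cartan_inf C d (weight_sol C d i) k
      = - cartan_inf C d (capped_sol C d (min i d)) k - Delta C d * cartan_inf C d (ramp d (max i d)) k"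
    using cartan_inf_linear[of C d "-1" "capped_sol C d (min i d)" "- Delta C d" "ramp d (max i d)" k]
    by (simp add: weight_sol_def)
  then show ?thesis
    using assms cartan_inf_capped_sol[of d "min i d" k C] cartan_inf_ramp[of d "max i d" k C]
    by (auto simp: max_def min_def)
qed

lemma weight_sol_eventually_const: "max i d \<le> j \<Longrightarrow> weight_sol C d i j = - weight_coeff C d i"
  by (simp add: weight_sol_def weight_coeff_def capped_sol_def ramp_def)

lemma congr_Q_fund_weight_iff:
  assumes "1 \<le> n"
  shows "congr_Q C d n (smult_w p (fund_weight n i)) (smult_w q (fund_weight_bar n 1)) \<longleftrightarrow>
    (\<exists>c. \<forall>k\<in>{1..n}. cartan_mult C d n c k = (if k = i then p else 0) - (if k = n then q else 0))"
proof -
  have weights: "smult_w p (fund_weight n i) k - smult_w q (fund_weight_bar n 1) k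
      = (if k \<in> {1..n} then (if k = i then p else 0) - (if k = n then q else 0) else 0)" for k
    using assms by (simp add: smult_w_def fund_weight_def fund_weight_bar_def)
  have roots: "(\<Sum>l\<in>{1..n}. c l * simple_root C d n l k)
      = (if k \<in> {1..n} then cartan_mult C d n c k else 0)" for c k
    by (cases "k \<in> {1..n}") (auto simp: simple_root_def cartan_mult_def mult.commute)
  have "congr_Q C d n (smult_w p (fund_weight n i)) (smult_w q (fund_weight_bar n 1)) \<longleftrightarrow>
    (\<exists>c. \<forall>k. (if k \<in> {1..n} then (if k = i then p else 0) - (if k = n then q else 0) else 0)
       = (if k \<in> {1..n} then cartan_mult C d n c k else 0))"
    unfolding congr_Q_def root_lattice_def by (simp only: mem_Collect_eq fun_eq_iff weights roots simp_thms)
  also have "\<dots> \<longleftrightarrow>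
    (\<exists>c. \<forall>k\<in>{1..n}. cartan_mult C d n c k = (if k = i then p else 0) - (if k = n then q else 0))"
    by (rule ex_cong1) (metis (no_types, lifting))
  finally show ?thesis .
qed

lemma weight_seq_prop_weight_coeff:
  assumes d: "1 \<le> d"
  shows "weight_seq_prop C d (weight_coeff C d)"
  unfolding weight_seq_prop_def
proof (intro allI impI ballI)
  fix n i assume n: "d \<le> n" and i: "i \<in> {1..n}"
  have "cartan_mult C d n (weight_sol C d i) k
      = (if k = i then - Delta C d else 0) - (if k = n then weight_coeff C d i else 0)"
    if k: "k \<in> {1..n}" for k
  proof -
    have "cartan_mult C d n (weight_sol C d i) k
        = cartan_inf C d (weight_sol C d i) k + (if k = n then weight_sol C d i (Suc n) else 0)"
      by (rule cartan_mult_eq_cartan_inf[OF d n k])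
    also have "weight_sol C d i (Suc n) = - weight_coeff C d i"
      using i n by (intro weight_sol_eventually_const) simp
    also have "cartan_inf C d (weight_sol C d i) k = (if k = i then - Delta C d else 0)"
      using i k by (intro cartan_inf_weight_sol[OF d]) simp_all
    finally show ?thesis by simp
  qed
  moreover have "1 \<le> n" using d n by simp
  ultimately show "congr_Q C d n (smult_w (- Delta C d) (fund_weight n i))
      (smult_w (weight_coeff C d i) (fund_weight_bar n 1))"
    using congr_Q_fund_weight_iff[of n C d "- Delta C d" i "weight_coeff C d i"] by blast
qed

lemma coprime_det_ext_Suc:
  assumes "extensible C d" "d \<le> n"
  shows "coprime (det_ext C d (Suc n)) (det_ext C d n)"
proof -
  have "gcd (det_ext C d (Suc n)) (det_ext C d n) = gcd (Delta C d) (det_ext C d n)"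
    using det_ext_Suc[OF assms(2)] by (simp add: add.commute)
  also have "\<dots> = gcd (Delta C d) (gdet d C)"
    using det_ext_arith_prog[OF assms(2)] gcd_add_mult[of "Delta C d" "int (n - d)" "gdet d C"]
    by (simp add: det_ext_self add.commute)
  also have "\<dots> = 1"
    using assms(1) by (simp add: extensible_def)
  finally show ?thesis by (simp add: coprime_iff_gcd_eq_1)
qed

lemma det_ext_mult_last_coord:
  assumes sol: "\<And>k. k \<in> {1..n} \<Longrightarrow> cartan_mult C d n c k = (if k = n then \<kappa> else 0)" and n: "1 \<le> n"
  shows "det_ext C d n * c n = \<kappa> * det_ext C d (n - 1)"
proof -
  have "det_ext C d n * c n = (\<Sum>k\<in>{1..n}. gadj n (ext_cartan C d n) n k * (if k = n then \<kappa> else 0))"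
    unfolding det_ext_def by (rule gdet_mult_solution) (use sol n in \<open>auto simp: cartan_mult_def\<close>)
  also have "\<dots> = (\<Sum>k\<in>{1..n}. if k = n then gadj n (ext_cartan C d n) n n * \<kappa> else 0)"
    by (rule sum.cong) auto
  also have "\<dots> = gadj n (ext_cartan C d n) n n * \<kappa>"
    using n by simp
  also have "\<dots> = \<kappa> * det_ext C d (n - 1)"
    using n gadj_last[of "n - 1" "ext_cartan C d n"] by (simp add: gdet_ext_cartan_restrict)
  finally show ?thesis .
qed

lemma det_ext_dvd_coeff_diff:
  assumes ext: "extensible C d" and d: "1 \<le> d" and n: "d < n" "det_ext C d n \<noteq> 0"
    and i: "i \<in> {1..n}" and a: "weight_seq_prop C d a" and b: "weight_seq_prop C d b"
  shows "det_ext C d n dvd b i - a i"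
proof -
  have n1: "1 \<le> n" using d n by simp
  have "congr_Q C d n (smult_w (- Delta C d) (fund_weight n i)) (smult_w (a i) (fund_weight_bar n 1))"
    using a n i unfolding weight_seq_prop_def by auto
  then obtain ca where
    ca: "\<forall>k\<in>{1..n}. cartan_mult C d n ca k = (if k = i then - Delta C d else 0) - (if k = n then a i else 0)"
    unfolding congr_Q_fund_weight_iff[OF n1] by blast
  have "congr_Q C d n (smult_w (- Delta C d) (fund_weight n i)) (smult_w (b i) (fund_weight_bar n 1))"
    using b n i unfolding weight_seq_prop_def by auto
  then obtain cb where
    cb: "\<forall>k\<in>{1..n}. cartan_mult C d n cb k = (if k = i then - Delta C d else 0) - (if k = n then b i else 0)"
    unfolding congr_Q_fund_weight_iff[OF n1] by blast
  have "cartan_mult C d n (\<lambda>l. ca l - cb l) k = (if k = n then b i - a i else 0)" if "k \<in> {1..n}" for k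
    using ca cb that by (simp add: cartan_mult_def right_diff_distrib sum_subtractf)
  then have "det_ext C d n * (ca n - cb n) = (b i - a i) * det_ext C d (n - 1)"
    using n1 by (rule det_ext_mult_last_coord)
  then have "det_ext C d n dvd (b i - a i) * det_ext C d (n - 1)"
    by (metis dvd_triv_left)
  moreover have "coprime (det_ext C d n) (det_ext C d (n - 1))"
    using coprime_det_ext_Suc[OF ext, of "n - 1"] n by simp
  ultimately show ?thesis
    by (simp add: coprime_dvd_mult_left_iff)
qed

lemma det_ext_unbounded:
  assumes "Delta C d \<noteq> 0"
  obtains n where "N < n" "B < \<bar>det_ext C d n\<bar>"
proof
  define t where "t = N + nat (\<bar>det_ext C d d\<bar> + \<bar>B\<bar>) + 1"
  show "N < d + t" by (simp add: t_def)
  have "1 \<le> \<bar>Delta C d\<bar>"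
    using assms by linarith
  then have "int t \<le> \<bar>int t * Delta C d\<bar>"
    using mult_left_mono[of 1 "\<bar>Delta C d\<bar>" "int t"] by (simp add: abs_mult)
  also have "\<dots> \<le> \<bar>det_ext C d (d + t)\<bar> + \<bar>det_ext C d d\<bar>"
    using det_ext_arith_prog[of d "d + t" C] abs_triangle_ineq4[of "det_ext C d (d + t)" "det_ext C d d"]
    by simp
  finally show "B < \<bar>det_ext C d (d + t)\<bar>"
    using abs_ge_self[of B] by (simp add: t_def)
qed

lemma weight_seq_prop_unique:
  assumes ext: "extensible C d" and d: "1 \<le> d" and i: "1 \<le> i"
    and a: "weight_seq_prop C d a" and b: "weight_seq_prop C d b"
  shows "b i = a i"
proof (rule ccontr)
  assume ne: "b i \<noteq> a i"
  have "Delta C d \<noteq> 0"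
    using ext by (simp add: extensible_def)
  then obtain n where n: "max i d < n" and large: "\<bar>b i - a i\<bar> < \<bar>det_ext C d n\<bar>"
    by (rule det_ext_unbounded)
  then have "det_ext C d n dvd b i - a i"
    using det_ext_dvd_coeff_diff[OF ext d _ _ _ a b] i by auto
  then have "\<bar>det_ext C d n\<bar> \<le> \<bar>b i - a i\<bar>"
    using ne by (intro dvd_imp_le_int) simp_all
  with large show False
    by simp
qed

theorem proposition3p3:
  fixes C :: "nat \<Rightarrow> nat \<Rightarrow> int" and d :: nat
  assumes "d \<ge> 1"
    and "is_gcm d C"
    and "symmetrizable d C"
    and "extensible C d"
  shows "\<exists>a :: nat \<Rightarrow> int. weight_seq_prop C d a \<and>
           (\<forall>b :: nat \<Rightarrow> int. weight_seq_prop C d b \<longrightarrow> (\<forall>i\<ge>1. b i = a i))"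
  using weight_seq_prop_weight_coeff[OF assms(1)] weight_seq_prop_unique[OF assms(4,1)] by blast

end
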